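(* Let $r\in\{-1,+1\}$ and $\Phi(x,y)=r\phi(x-y)$. For any proper lsc $f:\mathbb R^n\to\overline{\mathbb R}$ and any $\bar x\in\mathbb R^n$ one has $\partial_\Phi f(\bar x)\subseteq\bar x-\nabla\phi^*(r\hat\partial f(\bar x))$. Moreover, the following are equivalent: (a) for every $\bar v\in\partial f(\bar x)$, $f(x)\ge f(\bar x)+r\phi(x-\bar x+\nabla\phi^*(r\bar v))-r\phi(\nabla\phi^*(r\bar v))$ for all $x\in\mathbb R^n$; (b) $\partial_\Phi f(\bar x)=\bar x-\nabla\phi^*(r\partial f(\bar x))$. Under either condition, $\partial f(\bar x)=\hat\partial f(\bar x)$. In particular, if $f$ is a-weakly convex (taking $r=-1$) or a-strongly convex (taking $r=+1$), then $\partial f=\hat\partial f$ and $\operatorname{dom}\partial_\Phi f=\operatorname{dom}\hat\partial f$.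
   Context: Standing assumption: $\phi:\mathbb R^n\to\mathbb R$ is convex, finite-valued, differentiable and strictly convex (Legendre with full domain), super-coercive; $\phi^*$ has the same properties and $\nabla\phi^*=(\nabla\phi)^{-1}$. $\hat\partial f$ is the regular (Fréchet) subdifferential and $\partial f$ the limiting subdifferential. For $\bar x\in\operatorname{dom}f$, $\partial_\Phi f(\bar x)=\{\bar y: f(x)\ge f(\bar x)+\Phi(x,\bar y)-\Phi(\bar x,\bar y)\ \forall x\}$ ($\emptyset$ if $\bar x\notin\operatorname{dom}f$); $\operatorname{dom}T=\{x:T(x)\ne\emptyset\}$. A proper lsc $f$ is a-weakly convex if for every $(\bar x,\bar v)\in\operatorname{graph}\partial f$: $f(x)\ge f(\bar x)-\phi(x-\bar x+\nabla\phi^*(-\bar v))+\phi(\nabla\phi^*(-\bar v))$ for all $x$; a-strongly convex if for every such pair $f(x)\ge f(\bar x)+\phi(x-\bar x+\nabla\phi^*(\bar v))-\phi(\nabla\phi^*(\bar v))$ for all $x$. *)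

theory Defs
  imports "HOL-Analysis.Analysis"
begin

text \<open>R^n is rendered as an arbitrary Euclidean space 'a. Extended-real valued
functions are ereal valued.\<close>

definition strictly_convex_on :: "'a::real_vector set \<Rightarrow> ('a \<Rightarrow> real) \<Rightarrow> bool" where
  "strictly_convex_on S f \<longleftrightarrow> convex S \<and>
     (\<forall>x\<in>S. \<forall>y\<in>S. x \<noteq> y \<longrightarrow> (\<forall>u::real. 0 < u \<and> u < 1 \<longrightarrow>
        f (u *\<^sub>R x + (1 - u) *\<^sub>R y) < u * f x + (1 - u) * f y))"

definition super_coercive :: "('a::real_normed_vector \<Rightarrow> real) \<Rightarrow> bool" where
  "super_coercive f \<longleftrightarrow> filterlim (\<lambda>x. f x / norm x) at_top at_infinity"

definition grad :: "('a::real_inner \<Rightarrow> real) \<Rightarrow> 'a \<Rightarrow> 'a" where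
  "grad f x = (THE g. GDERIV f x :> g)"

definition conjugate :: "('a::real_inner \<Rightarrow> real) \<Rightarrow> 'a \<Rightarrow> real" where
  "conjugate f y = (SUP x. inner x y - f x)"

definition legendre_reference :: "('a::euclidean_space \<Rightarrow> real) \<Rightarrow> bool" where
  "legendre_reference \<phi> \<longleftrightarrow>
     convex_on UNIV \<phi> \<and> strictly_convex_on UNIV \<phi> \<and> (\<forall>x. \<phi> differentiable at x) \<and>
     super_coercive \<phi> \<and>
     convex_on UNIV (conjugate \<phi>) \<and> strictly_convex_on UNIV (conjugate \<phi>) \<and>
     (\<forall>y. conjugate \<phi> differentiable at y) \<and> super_coercive (conjugate \<phi>) \<and>
     (\<forall>x. grad (conjugate \<phi>) (grad \<phi> x) = x) \<and>
     (\<forall>y. grad \<phi> (grad (conjugate \<phi>) y) = y)"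

definition proper :: "('a \<Rightarrow> ereal) \<Rightarrow> bool" where
  "proper f \<longleftrightarrow> (\<forall>x. f x \<noteq> -\<infinity>) \<and> (\<exists>x. f x \<noteq> \<infinity>)"

definition lsc :: "('a::topological_space \<Rightarrow> ereal) \<Rightarrow> bool" where
  "lsc f \<longleftrightarrow> (\<forall>x. f x \<le> Liminf (at x) f)"

definition edom :: "('a \<Rightarrow> ereal) \<Rightarrow> 'a set" where
  "edom f = {x. f x < \<infinity>}"

definition regular_subdiff :: "('a::real_inner \<Rightarrow> ereal) \<Rightarrow> 'a \<Rightarrow> 'a set" where
  "regular_subdiff f xb = {v. \<bar>f xb\<bar> \<noteq> \<infinity> \<and>
     (\<forall>\<epsilon>>0. \<exists>\<delta>>0. \<forall>x. norm (x - xb) < \<delta> \<longrightarrow>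
        f x \<ge> f xb + ereal (inner v (x - xb) - \<epsilon> * norm (x - xb)))}"

definition limiting_subdiff :: "('a::real_inner \<Rightarrow> ereal) \<Rightarrow> 'a \<Rightarrow> 'a set" where
  "limiting_subdiff f xb = {v. \<bar>f xb\<bar> \<noteq> \<infinity> \<and>
     (\<exists>xs vs. xs \<longlonglongrightarrow> xb \<and> (\<lambda>k. f (xs k)) \<longlonglongrightarrow> f xb \<and>
        (\<forall>k. vs k \<in> regular_subdiff f (xs k)) \<and> vs \<longlonglongrightarrow> v)}"

definition Phi_subdiff :: "('a \<Rightarrow> 'b \<Rightarrow> real) \<Rightarrow> ('a \<Rightarrow> ereal) \<Rightarrow> 'a \<Rightarrow> 'b set" where
  "Phi_subdiff \<Phi> f xb = (if xb \<in> edom f then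
     {yb. \<forall>x. f x \<ge> f xb + ereal (\<Phi> x yb - \<Phi> xb yb)} else {})"

definition dom_map :: "('a \<Rightarrow> 'b set) \<Rightarrow> 'a set" where
  "dom_map T = {x. T x \<noteq> {}}"

definition a_weakly_convex :: "('a::euclidean_space \<Rightarrow> real) \<Rightarrow> ('a \<Rightarrow> ereal) \<Rightarrow> bool" where
  "a_weakly_convex \<phi> f \<longleftrightarrow> proper f \<and> lsc f \<and>
     (\<forall>xb. \<forall>vb\<in>limiting_subdiff f xb. \<forall>x.
        f x \<ge> f xb + ereal (- \<phi> (x - xb + grad (conjugate \<phi>) (- vb))
                             + \<phi> (grad (conjugate \<phi>) (- vb))))"

definition a_strongly_convex :: "('a::euclidean_space \<Rightarrow> real) \<Rightarrow> ('a \<Rightarrow> ereal) \<Rightarrow> bool" where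
  "a_strongly_convex \<phi> f \<longleftrightarrow> proper f \<and> lsc f \<and>
     (\<forall>xb. \<forall>vb\<in>limiting_subdiff f xb. \<forall>x.
        f x \<ge> f xb + ereal (\<phi> (x - xb + grad (conjugate \<phi>) vb)
                             - \<phi> (grad (conjugate \<phi>) vb)))"

end

theory Submission
  imports Defs
begin

text \<open>If \<open>y\<close> is a \<open>\<Phi>\<close>-subgradient of \<open>f\<close> at \<open>xb\<close>, then the smooth function
  \<open>x \<mapsto> r \<phi>(x - y)\<close>, shifted to agree with \<open>f\<close> at \<open>xb\<close>, minorizes \<open>f\<close>; hence its gradient
  \<open>v = r \<nabla>\<phi>(xb - y)\<close> is a regular subgradient, and \<open>y = xb - \<nabla>\<phi>*(r v)\<close> because \<open>\<nabla>\<phi>*\<close>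
  inverts \<open>\<nabla>\<phi>\<close> and \<open>r\<^sup>2 = 1\<close>. Conversely, \<open>xb - \<nabla>\<phi>*(r v)\<close> is a \<open>\<Phi>\<close>-subgradient exactly when
  the minorization inequality of condition (a) holds for \<open>v\<close>. So (a) says that every
  limiting subgradient arises this way, which forces it to be regular, by injectivity of
  \<open>v \<mapsto> \<nabla>\<phi>*(r v)\<close>.\<close>

lemma linear_eq_inner_sum_Basis:
  fixes D :: "'a::euclidean_space \<Rightarrow> real"
  assumes "linear D"
  shows "D h = h \<bullet> (\<Sum>b\<in>Basis. D b *\<^sub>R b)"
proof -
  have "D h = D (\<Sum>b\<in>Basis. (h \<bullet> b) *\<^sub>R b)" by (simp add: euclidean_representation)
  also have "\<dots> = (\<Sum>b\<in>Basis. (h \<bullet> b) * D b)"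
    using assms by (simp add: linear_sum linear_scale)
  also have "\<dots> = h \<bullet> (\<Sum>b\<in>Basis. D b *\<^sub>R b)"
    by (simp add: inner_sum_right mult.commute)
  finally show ?thesis .
qed

lemma has_derivative_grad:
  fixes g :: "'a::euclidean_space \<Rightarrow> real"
  assumes "g differentiable at x"
  shows "(g has_derivative (\<lambda>h. h \<bullet> grad g x)) (at x)"
proof -
  obtain D where D: "(g has_derivative D) (at x)" using assms differentiable_def by blast
  define v where "v = (\<Sum>b\<in>Basis. D b *\<^sub>R b)"
  have "D = (\<lambda>h. h \<bullet> v)"
    unfolding v_def using linear_eq_inner_sum_Basis has_derivative_linear[OF D] by blast
  then have gv: "GDERIV g x :> v" unfolding gderiv_def using D by simp
  have "grad g x = v"
    unfolding grad_def
  proof (rule the_equality)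
    fix w assume "GDERIV g x :> w"
    then have "(\<lambda>h. h \<bullet> w) = (\<lambda>h. h \<bullet> v)"
      using gv unfolding gderiv_def using has_derivative_unique by blast
    then have "(w - v) \<bullet> w = (w - v) \<bullet> v" by (rule fun_cong)
    then have "(w - v) \<bullet> (w - v) = 0" by (simp add: inner_diff_right)
    then show "w = v" by simp
  qed (rule gv)
  then show ?thesis using gv unfolding gderiv_def by simp
qed

lemma regular_subdiff_of_differentiable_minorant:
  fixes f :: "'a::real_inner \<Rightarrow> ereal"
  assumes finite: "\<bar>f xb\<bar> \<noteq> \<infinity>"
    and minorant: "\<And>x. f x \<ge> f xb + ereal (g x - g xb)"
    and deriv: "(g has_derivative (\<lambda>h. h \<bullet> w)) (at xb)"
  shows "w \<in> regular_subdiff f xb"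
  unfolding regular_subdiff_def
proof (intro CollectI conjI allI impI finite)
  fix e :: real assume "e > 0"
  then obtain d where "d > 0" and d: "\<And>y. norm (y - xb) < d \<Longrightarrow>
      norm (g y - g xb - (y - xb) \<bullet> w) \<le> e * norm (y - xb)"
    using deriv unfolding has_derivative_at_alt by blast
  have "f xb + ereal (w \<bullet> (x - xb) - e * norm (x - xb)) \<le> f x" if "norm (x - xb) < d" for x
  proof -
    have "w \<bullet> (x - xb) - e * norm (x - xb) \<le> g x - g xb"
      using d[OF that] by (simp add: inner_commute abs_le_iff)
    then have "f xb + ereal (w \<bullet> (x - xb) - e * norm (x - xb)) \<le> f xb + ereal (g x - g xb)"
      by (intro add_left_mono) simp
    also have "\<dots> \<le> f x" by (rule minorant)
    finally show ?thesis .
  qed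
  with \<open>d > 0\<close> show "\<exists>\<delta>>0. \<forall>x. norm (x - xb) < \<delta> \<longrightarrow>
      f xb + ereal (w \<bullet> (x - xb) - e * norm (x - xb)) \<le> f x"
    by blast
qed

lemma regular_subdiff_subset_limiting_subdiff:
  "regular_subdiff f xb \<subseteq> limiting_subdiff f xb"
proof
  fix v assume v: "v \<in> regular_subdiff f xb"
  then have "\<bar>f xb\<bar> \<noteq> \<infinity>" unfolding regular_subdiff_def by simp
  with v show "v \<in> limiting_subdiff f xb"
    unfolding limiting_subdiff_def
    by (intro CollectI conjI exI[of _ "\<lambda>_. xb"] exI[of _ "\<lambda>_. v"]) auto
qed

lemma limiting_subdiff_imp_edom:
  "v \<in> limiting_subdiff f xb \<Longrightarrow> xb \<in> edom f"
  unfolding limiting_subdiff_def edom_def by auto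

lemma shifted_mem_Phi_subdiff_iff:
  fixes \<phi> :: "'a::ab_group_add \<Rightarrow> real"
  assumes "xb \<in> edom f"
  shows "xb - c \<in> Phi_subdiff (\<lambda>x y. r * \<phi> (x - y)) f xb \<longleftrightarrow>
         (\<forall>x. f x \<ge> f xb + ereal (r * \<phi> (x - xb + c) - r * \<phi> c))"
  using assms unfolding Phi_subdiff_def by (simp add: algebra_simps)

lemma Phi_subdiff_imp_regular_subgradient:
  fixes \<phi> :: "'a::euclidean_space \<Rightarrow> real"
  assumes "\<forall>x. \<phi> differentiable at x" and "proper f"
    and y: "y \<in> Phi_subdiff (\<lambda>x y. r * \<phi> (x - y)) f xb"
  shows "r *\<^sub>R grad \<phi> (xb - y) \<in> regular_subdiff f xb"
proof (rule regular_subdiff_of_differentiable_minorant)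
  from y have "xb \<in> edom f"
    and minorant: "\<And>x. f x \<ge> f xb + ereal (r * \<phi> (x - y) - r * \<phi> (xb - y))"
    unfolding Phi_subdiff_def by (auto split: if_splits)
  with \<open>proper f\<close> show "\<bar>f xb\<bar> \<noteq> \<infinity>" unfolding edom_def proper_def by auto
  show "f x \<ge> f xb + ereal (r * \<phi> (x - y) - r * \<phi> (xb - y))" for x by (rule minorant)
  have "((\<lambda>x. \<phi> (x - y)) has_derivative (\<lambda>h. h \<bullet> grad \<phi> (xb - y))) (at xb)"
    using has_derivative_compose[OF has_derivative_diff[OF has_derivative_ident has_derivative_const]
        has_derivative_grad[of \<phi> "xb - y"]] assms(1) by simp
  from has_derivative_mult_right[OF this, of r]
  show "((\<lambda>x. r * \<phi> (x - y)) has_derivative (\<lambda>h. h \<bullet> (r *\<^sub>R grad \<phi> (xb - y)))) (at xb)"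
    by simp
qed

definition Phi_support_condition ::
    "('a::euclidean_space \<Rightarrow> real) \<Rightarrow> real \<Rightarrow> ('a \<Rightarrow> ereal) \<Rightarrow> 'a \<Rightarrow> bool" where
  "Phi_support_condition \<phi> r f xb \<longleftrightarrow>
     (\<forall>vb\<in>limiting_subdiff f xb. \<forall>x.
        f x \<ge> f xb + ereal (r * \<phi> (x - xb + grad (conjugate \<phi>) (r *\<^sub>R vb))
                             - r * \<phi> (grad (conjugate \<phi>) (r *\<^sub>R vb))))"

lemma a_weakly_convex_imp_Phi_support_condition:
  "a_weakly_convex \<phi> f \<Longrightarrow> Phi_support_condition \<phi> (-1) f xb"
  unfolding a_weakly_convex_def Phi_support_condition_def by simp

lemma a_strongly_convex_imp_Phi_support_condition:
  "a_strongly_convex \<phi> f \<Longrightarrow> Phi_support_condition \<phi> 1 f xb"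
  unfolding a_strongly_convex_def Phi_support_condition_def by simp

context
  fixes \<phi> :: "'a::euclidean_space \<Rightarrow> real" and r :: real
  assumes differentiable: "\<forall>x. \<phi> differentiable at x"
    and grad_conjugate_grad: "\<forall>x. grad (conjugate \<phi>) (grad \<phi> x) = x"
    and grad_grad_conjugate: "\<forall>y. grad \<phi> (grad (conjugate \<phi>) y) = y"
    and sign: "r = -1 \<or> r = 1"
begin

lemma Phi_subdiff_subset_regular_subdiff:
  assumes "proper f"
  shows "Phi_subdiff (\<lambda>x y. r * \<phi> (x - y)) f xb \<subseteq>
           (\<lambda>v. xb - grad (conjugate \<phi>) (r *\<^sub>R v)) ` regular_subdiff f xb"
proof
  fix y assume y: "y \<in> Phi_subdiff (\<lambda>x y. r * \<phi> (x - y)) f xb"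
  define v where "v = r *\<^sub>R grad \<phi> (xb - y)"
  have "v \<in> regular_subdiff f xb"
    unfolding v_def using Phi_subdiff_imp_regular_subgradient[OF differentiable assms y] .
  moreover have "y = xb - grad (conjugate \<phi>) (r *\<^sub>R v)"
    unfolding v_def using sign grad_conjugate_grad by auto
  ultimately show "y \<in> (\<lambda>v. xb - grad (conjugate \<phi>) (r *\<^sub>R v)) ` regular_subdiff f xb"
    by blast
qed

lemma inj_grad_conjugate_scaleR: "inj (\<lambda>v. grad (conjugate \<phi>) (r *\<^sub>R v))"
proof
  fix u v assume "grad (conjugate \<phi>) (r *\<^sub>R u) = grad (conjugate \<phi>) (r *\<^sub>R v)"
  then have "grad \<phi> (grad (conjugate \<phi>) (r *\<^sub>R u)) = grad \<phi> (grad (conjugate \<phi>) (r *\<^sub>R v))"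
    by simp
  then show "u = v" using grad_grad_conjugate sign by auto
qed

lemma Phi_support_condition_iff:
  assumes "proper f"
  shows "Phi_support_condition \<phi> r f xb \<longleftrightarrow>
         Phi_subdiff (\<lambda>x y. r * \<phi> (x - y)) f xb =
           (\<lambda>v. xb - grad (conjugate \<phi>) (r *\<^sub>R v)) ` limiting_subdiff f xb"
    (is "_ \<longleftrightarrow> ?P = ?G ` _")
proof -
  have "Phi_support_condition \<phi> r f xb \<longleftrightarrow> ?G ` limiting_subdiff f xb \<subseteq> ?P"
    unfolding Phi_support_condition_def
    using shifted_mem_Phi_subdiff_iff[OF limiting_subdiff_imp_edom] by blast
  moreover have "?P \<subseteq> ?G ` limiting_subdiff f xb"
    using Phi_subdiff_subset_regular_subdiff[OF assms] regular_subdiff_subset_limiting_subdiff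
    by blast
  ultimately show ?thesis by blast
qed

lemma Phi_support_condition_imp_limiting_eq_regular:
  assumes "proper f" and "Phi_support_condition \<phi> r f xb"
  shows "limiting_subdiff f xb = regular_subdiff f xb"
proof
  show "limiting_subdiff f xb \<subseteq> regular_subdiff f xb"
  proof
    fix vb assume "vb \<in> limiting_subdiff f xb"
    then have "xb - grad (conjugate \<phi>) (r *\<^sub>R vb) \<in>
        (\<lambda>v. xb - grad (conjugate \<phi>) (r *\<^sub>R v)) ` regular_subdiff f xb"
      using assms Phi_support_condition_iff Phi_subdiff_subset_regular_subdiff by blast
    then show "vb \<in> regular_subdiff f xb"
      using inj_grad_conjugate_scaleR by (auto dest: injD)
  qed
qed (rule regular_subdiff_subset_limiting_subdiff)

end

theorem mainTheorem8:
  fixes \<phi> :: "'a::euclidean_space \<Rightarrow> real"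
    and f :: "'a \<Rightarrow> ereal"
    and r :: real and xb :: 'a
  assumes leg: "legendre_reference \<phi>"
    and r: "r = -1 \<or> r = 1"
    and hproper: "proper f" and hlsc: "lsc f"
  defines "\<Phi> \<equiv> (\<lambda>x y. r * \<phi> (x - y))"
  shows "(Phi_subdiff \<Phi> f xb \<subseteq>
           (\<lambda>v. xb - grad (conjugate \<phi>) (r *\<^sub>R v)) ` regular_subdiff f xb)
     \<and> ((\<forall>vb\<in>limiting_subdiff f xb. \<forall>x.
            f x \<ge> f xb + ereal (r * \<phi> (x - xb + grad (conjugate \<phi>) (r *\<^sub>R vb))
                                 - r * \<phi> (grad (conjugate \<phi>) (r *\<^sub>R vb))))
         \<longleftrightarrow> Phi_subdiff \<Phi> f xb =
           (\<lambda>v. xb - grad (conjugate \<phi>) (r *\<^sub>R v)) ` limiting_subdiff f xb)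
     \<and> ((\<forall>vb\<in>limiting_subdiff f xb. \<forall>x.
            f x \<ge> f xb + ereal (r * \<phi> (x - xb + grad (conjugate \<phi>) (r *\<^sub>R vb))
                                 - r * \<phi> (grad (conjugate \<phi>) (r *\<^sub>R vb))))
         \<longrightarrow> limiting_subdiff f xb = regular_subdiff f xb)
     \<and> ((r = -1 \<and> a_weakly_convex \<phi> f) \<or> (r = 1 \<and> a_strongly_convex \<phi> f) \<longrightarrow>
           (\<forall>x. limiting_subdiff f x = regular_subdiff f x) \<and>
           dom_map (Phi_subdiff \<Phi> f) = dom_map (regular_subdiff f))"
proof -
  have standing: "\<forall>x. \<phi> differentiable at x" "\<forall>x. grad (conjugate \<phi>) (grad \<phi> x) = x"
      "\<forall>y. grad \<phi> (grad (conjugate \<phi>) y) = y"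
    using leg unfolding legendre_reference_def by simp_all
  note subset = Phi_subdiff_subset_regular_subdiff[OF standing r hproper]
  note iff = Phi_support_condition_iff[OF standing r hproper]
  note eq = Phi_support_condition_imp_limiting_eq_regular[OF standing r hproper]
  have "(\<forall>x. limiting_subdiff f x = regular_subdiff f x) \<and>
        dom_map (Phi_subdiff \<Phi> f) = dom_map (regular_subdiff f)"
    if "(r = -1 \<and> a_weakly_convex \<phi> f) \<or> (r = 1 \<and> a_strongly_convex \<phi> f)"
  proof -
    have cond: "Phi_support_condition \<phi> r f x" for x
      using that a_weakly_convex_imp_Phi_support_condition
        a_strongly_convex_imp_Phi_support_condition by blast
    show ?thesis
      unfolding dom_map_def \<Phi>_def using eq[OF cond] iff cond by simp
  qed
  then show ?thesis
    using subset iff eq unfolding \<Phi>_def Phi_support_condition_def by blast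
qed

end
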